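(* Consider the multi-agent setting described in the context, with parameters $\alpha>0$ and $F\in\mathbb Z_{\ge0}$. Assume: - the set $\mathcal A$ of misbehaving agents is $F$-local; - the digraph $\mathcal D$ is $(2F+1)$-robust. Let $x_{\mathcal N}:[0,t_1)\to\mathbb R^{|\mathcal N|}$ be a trajectory of the normal agents. Then the derivatives $\frac{d}{dt}M(x_{\mathcal N}(t))$ and $\frac{d}{dt}m(x_{\mathcal N}(t))$ exist at almost all $t\in[0,t_1)$, and at almost all such $t$, $$\tfrac{d}{dt}M(x_{\mathcal N}(t))\in[-\alpha,0],\qquad \tfrac{d}{dt}m(x_{\mathcal N}(t))\in[0,\alpha].$$
   Context: Setting. Let $\mathcal D=(\mathcal V,\mathcal E)$ be a digraph with $\mathcal V=\{1,\dots,n\}$ and $n\ge2$. An edge $(i,j)\in\mathcal E$ means that agent $j$ receives information from agent $i$. The in-neighbor set of $i$ is $\mathcal V_i=\{j:(j,i)\in\mathcal E\}$, and $\mathcal J_i=\mathcal V_i\cup\{i\}$. - A nonempty $S\subset\mathcal V$ is $r$-reachable if some $i\in S$ has $|\mathcal V_i\setminus S|\ge r$. - $\mathcal D$ is $r$-robust if for every pair of nonempty disjoint subsets of $\mathcal V$, at least one of them is $r$-reachable. Dynamics and communication. Each agent has a scalar state with $\dot x_i(t)=u_i(t)$. Fix a strictly increasing $g:\mathbb R\to\mathbb R$ (not necessarily continuous). At time $t$, agent $i$ receives from each in-neighbor $j$ a value $g(x^i_j(t))$. The agents are partitioned into normal agents $\mathcal N$ and misbehaving agents $\mathcal A$. -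 A normal agent $j$ sends $g(x_j(t))$ to all its out-neighbors, so $x^i_j=x_j$, and updates via the FTRC protocol. - Misbehaving agents may use arbitrary inputs and may send arbitrary, possibly different, values to different out-neighbors. The only restriction is that $t\mapsto g(x^i_k(t))$ is Lebesgue measurable for all $k\in\mathcal A$ and $i\in\mathcal N$. - $\mathcal A$ is $F$-local if $|\mathcal V_i\cap\mathcal A|\le F$ for every $i\in\mathcal V\setminus\mathcal A$. FTRC protocol for a normal agent $i$ at time $t$: 1. Sort the received values $g(x^i_j(t))$, $j\in\mathcal V_i$. 2. If fewer than $F$ values are strictly larger than $g(x_i(t))$, remove all values strictly larger than $g(x_i(t))$; otherwise remove exactly the $F$ largest values. 3. Likewise, if fewer than $F$ values are strictly smaller than $g(x_i(t))$, remove all values strictly smaller; otherwise remove exactly the $F$ smallest values. 4. With $\mathcal R_i(t)$ the set of agents whose values were removed, set $u_i(t)=\alpha\,\mathrm{sign}\big(\sum_{j\in\mathcal J_i\setminus\mathcal R_i(t)}(g(x^i_j(t))-g(x_i(t)))\big)$, where $x^i_i=x_i$ and $\mathrm{sign}(0)=0$. Trajectories and auxiliary functions. Write $x_{\mathcal N}=(x_{\mathcal N_1},\dots,x_{\mathcal N_{|\mathcal N|}})^T$ for a fixed ordering of $\mathcal N$. A trajectory of the normal agents on an interval $I\ni0$ is an absolutely continuous $x_{\mathcal N}:I\to\mathbb R^{|\mathcal N|}$ with $\dot x_{\mathcal N_k}(t)=u_{\mathcal N_k}(t)$ for all $k$ and almost every $t\in I$, where the $u$'s are given by the FTRC protocol.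 Define $M(x)=\max_k x_k$ and $m(x)=\min_k x_k$ for $x\in\mathbb R^{|\mathcal N|}$. *)

theory Defs
  imports "HOL-Analysis.Analysis" "HOL-Library.Extended_Real"
begin

text \<open>Digraph on vertex set V with edge set E; (i,j) in E means j receives from i.\<close>

definition in_nbrs :: "(nat \<times> nat) set \<Rightarrow> nat \<Rightarrow> nat set" where
  "in_nbrs E i = {j. (j, i) \<in> E}"

definition r_reachable :: "(nat \<times> nat) set \<Rightarrow> nat set \<Rightarrow> nat \<Rightarrow> bool" where
  "r_reachable E S r \<longleftrightarrow> (\<exists>i\<in>S. card (in_nbrs E i - S) \<ge> r)"

definition r_robust :: "nat set \<Rightarrow> (nat \<times> nat) set \<Rightarrow> nat \<Rightarrow> bool" where
  "r_robust V E r \<longleftrightarrow>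
     (\<forall>S1 S2. S1 \<subseteq> V \<longrightarrow> S2 \<subseteq> V \<longrightarrow> S1 \<noteq> {} \<longrightarrow> S2 \<noteq> {} \<longrightarrow> S1 \<inter> S2 = {}
        \<longrightarrow> r_reachable E S1 r \<or> r_reachable E S2 r)"

definition F_local :: "nat set \<Rightarrow> (nat \<times> nat) set \<Rightarrow> nat set \<Rightarrow> nat \<Rightarrow> bool" where
  "F_local V E A F \<longleftrightarrow> (\<forall>i \<in> V - A. card (in_nbrs E i \<inter> A) \<le> F)"

definition abs_cont_on_interval :: "(real \<Rightarrow> real) \<Rightarrow> real \<Rightarrow> real \<Rightarrow> bool" where
  "abs_cont_on_interval f a b \<longleftrightarrow>
     (\<forall>\<epsilon>>0. \<exists>\<delta>>0. \<forall>(m::nat) (l::nat \<Rightarrow> real) (r::nat \<Rightarrow> real).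
        (\<forall>i<m. a \<le> l i \<and> l i \<le> r i \<and> r i \<le> b) \<and>
        (\<forall>i<m. \<forall>j<m. i < j \<longrightarrow> r i \<le> l j) \<and>
        (\<Sum>i<m. r i - l i) < \<delta>
        \<longrightarrow> (\<Sum>i<m. \<bar>f (r i) - f (l i)\<bar>) < \<epsilon>)"

definition abs_cont_on :: "(real \<Rightarrow> real) \<Rightarrow> real set \<Rightarrow> bool" where
  "abs_cont_on f I \<longleftrightarrow> (\<forall>a\<in>I. \<forall>b\<in>I. a \<le> b \<longrightarrow> abs_cont_on_interval f a b)"

definition recv :: "nat set \<Rightarrow> (real \<Rightarrow> nat \<Rightarrow> real) \<Rightarrow> (nat \<Rightarrow> nat \<Rightarrow> real \<Rightarrow> real)
    \<Rightarrow> nat \<Rightarrow> nat \<Rightarrow> real \<Rightarrow> real" where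
  "recv N x y i j t = (if j \<in> N then x t j else y i j t)"

text \<open>R is an admissible set of removed agents for normal agent i at time t
  under the FTRC rule (ties among equal values may be broken arbitrarily).\<close>
definition FTRC_removed ::
  "(real \<Rightarrow> real) \<Rightarrow> nat \<Rightarrow> (nat \<times> nat) set \<Rightarrow> nat set \<Rightarrow> (real \<Rightarrow> nat \<Rightarrow> real)
    \<Rightarrow> (nat \<Rightarrow> nat \<Rightarrow> real \<Rightarrow> real) \<Rightarrow> nat \<Rightarrow> real \<Rightarrow> nat set \<Rightarrow> bool" where
  "FTRC_removed g F E N x y i t R \<longleftrightarrow>
    (let Vi = in_nbrs E i;
         v = (\<lambda>j. g (recv N x y i j t));
         own = g (x t i);
         Lg = {j\<in>Vi. v j > own};
         Sm = {j\<in>Vi. v j < own}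
     in \<exists>RL RS. R = RL \<union> RS \<and> RL \<subseteq> Vi \<and> RS \<subseteq> Vi \<and>
          (if card Lg < F then RL = Lg
           else card RL = F \<and> (\<forall>a\<in>RL. \<forall>b\<in>Vi - RL. v b \<le> v a)) \<and>
          (if card Sm < F then RS = Sm
           else card RS = F \<and> (\<forall>a\<in>RS. \<forall>b\<in>Vi - RS. v a \<le> v b)))"

definition FTRC_input ::
  "real \<Rightarrow> (real \<Rightarrow> real) \<Rightarrow> (nat \<times> nat) set \<Rightarrow> nat set \<Rightarrow> (real \<Rightarrow> nat \<Rightarrow> real)
    \<Rightarrow> (nat \<Rightarrow> nat \<Rightarrow> real \<Rightarrow> real) \<Rightarrow> nat \<Rightarrow> real \<Rightarrow> nat set \<Rightarrow> real" where
  "FTRC_input \<alpha> g E N x y i t R =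
     \<alpha> * sgn (\<Sum>j \<in> (in_nbrs E i \<union> {i}) - R. g (recv N x y i j t) - g (x t i))"

end

theory Submission
  imports Defs
begin

(* At almost every time all normal agents follow the FTRC rule and, in addition, any two
   normal agents whose states coincide have equal derivatives: a coincidence with different
   derivatives is isolated among such coincidences, so there are only countably many of them.
   At such a time the maximum of the states is differentiable, with the derivative of a
   maximising agent k.  A neighbour of k whose value exceeds that of k cannot be normal, so
   by F-locality there are at most F of them and the trimming step removes them all; the
   remaining terms of the FTRC sum are non-positive and the input of k lies in [-alpha, 0]. *)

lemma countable_discrete:
  fixes S :: "'a::second_countable_topology set"
  assumes "discrete S"
  shows "countable S"
proof -
  obtain \<B> :: "'a set set" where "countable \<B>"
    and basis: "\<And>U. open U \<Longrightarrow> \<exists>\<W>. \<W> \<subseteq> \<B> \<and> U = \<Union>\<W>"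
    using univ_second_countable by metis
  have "\<exists>C\<in>\<B>. C \<inter> S = {x}" if x: "x \<in> S" for x
  proof -
    obtain T where "open T" and T: "T \<inter> S = {x}"
      using discreteD[OF assms x] by (auto simp: isolated_in_def)
    then obtain \<W> where "\<W> \<subseteq> \<B>" "T = \<Union>\<W>"
      using basis by blast
    moreover have "x \<in> T"
      using T by blast
    ultimately obtain C where "C \<in> \<B>" "x \<in> C" "C \<subseteq> T"
      by blast
    then show ?thesis
      using T x by blast
  qed
  then obtain c where c: "\<And>x. x \<in> S \<Longrightarrow> c x \<in> \<B> \<and> c x \<inter> S = {x}"
    by metis
  then have "inj_on c S"
    by (intro inj_onI) (metis singleton_inject)
  moreover have "c ` S \<subseteq> \<B>"
    using c by blast
  ultimately show ?thesis
    using \<open>countable \<B>\<close> by (meson countable_image_inj_on countable_subset)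
qed

lemma DERIV_nonzero_imp_eventually_neq:
  fixes h :: "real \<Rightarrow> real"
  assumes "(h has_real_derivative d) (at t)" "d \<noteq> 0"
  shows "eventually (\<lambda>s. h s \<noteq> h t) (at t)"
proof -
  have "((\<lambda>s. (h s - h t) / (s - t)) \<longlongrightarrow> d) (at t)"
    using assms(1) by (simp add: has_field_derivative_iff)
  then have "eventually (\<lambda>s. (h s - h t) / (s - t) \<noteq> 0) (at t)"
    using assms(2) tendsto_imp_eventually_ne by blast
  then show ?thesis
    by eventually_elim auto
qed

lemma countable_transversal_coincidences:
  fixes f g :: "real \<Rightarrow> real"
  shows "countable {t. f t = g t \<and> (\<exists>a b. (f has_real_derivative a) (at t) \<and>
            (g has_real_derivative b) (at t) \<and> a \<noteq> b)}" (is "countable ?C")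
proof (rule countable_discrete, unfold discrete_altdef, intro ballI)
  fix t assume "t \<in> ?C"
  then obtain a b where "f t = g t" "a \<noteq> b"
    and "(f has_real_derivative a) (at t)" "(g has_real_derivative b) (at t)"
    by blast
  then have "eventually (\<lambda>s. f s - g s \<noteq> f t - g t) (at t)"
    by (intro DERIV_nonzero_imp_eventually_neq[where d = "a - b"] DERIV_diff) auto
  then show "eventually (\<lambda>s. s \<notin> ?C) (at t)"
    by (rule eventually_mono) (simp add: \<open>f t = g t\<close>)
qed

lemma AE_coincident_imp_equal_derivatives:
  fixes f :: "'a \<Rightarrow> real \<Rightarrow> real"
  assumes "finite S"
  shows "AE t in lebesgue. \<forall>i\<in>S. \<forall>j\<in>S. \<forall>a b. f i t = f j t \<longrightarrow>
           (f i has_real_derivative a) (at t) \<longrightarrow> (f j has_real_derivative b) (at t) \<longrightarrow> a = b"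
proof -
  let ?C = "\<lambda>i j. {t. f i t = f j t \<and> (\<exists>a b. (f i has_real_derivative a) (at t) \<and>
                    (f j has_real_derivative b) (at t) \<and> a \<noteq> b)}"
  have "countable (\<Union>i\<in>S. \<Union>j\<in>S. ?C i j)"
    using assms by (intro countable_UN countable_finite countable_transversal_coincidences)
  then have "(\<Union>i\<in>S. \<Union>j\<in>S. ?C i j) \<in> null_sets lebesgue"
    using countable_imp_null_set_lborel null_sets_completionI by blast
  then show ?thesis
    by (rule eventually_mono[OF AE_not_in]) blast
qed

lemma DERIV_rabs_at_double_zero:
  fixes h :: "real \<Rightarrow> real"
  assumes "(h has_real_derivative 0) (at t)" "h t = 0"
  shows "((\<lambda>s. \<bar>h s\<bar>) has_real_derivative 0) (at t)"
proof -
  have "((\<lambda>s. \<bar>(h s - h t) / (s - t)\<bar>) \<longlongrightarrow> 0) (at t)"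
    using assms(1) by (intro tendsto_rabs_zero) (simp add: has_field_derivative_iff)
  then have "((\<lambda>s. \<bar>(\<bar>h s\<bar> - \<bar>h t\<bar>) / (s - t)\<bar>) \<longlongrightarrow> 0) (at t)"
    using assms(2) by simp
  then show ?thesis
    unfolding has_field_derivative_iff by (rule tendsto_rabs_zero_cancel)
qed

lemma DERIV_max_tie:
  fixes f g :: "real \<Rightarrow> real"
  assumes "(f has_real_derivative D) (at t)" "(g has_real_derivative D) (at t)" "f t = g t"
  shows "((\<lambda>s. max (f s) (g s)) has_real_derivative D) (at t)"
proof -
  have "((\<lambda>s. \<bar>f s - g s\<bar>) has_real_derivative 0) (at t)"
    using DERIV_diff[OF assms(1,2)] assms(3) by (intro DERIV_rabs_at_double_zero) auto
  then have "((\<lambda>s. (f s + g s + \<bar>f s - g s\<bar>) / 2) has_real_derivative (D + D + 0) / 2) (at t)"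
    by (intro DERIV_cdivide DERIV_add assms)
  moreover have "(\<lambda>s. max (f s) (g s)) = (\<lambda>s. (f s + g s + \<bar>f s - g s\<bar>) / 2)"
    by (auto simp: max_def fun_eq_iff)
  ultimately show ?thesis
    by simp
qed

lemma DERIV_max_gt:
  fixes f g :: "real \<Rightarrow> real"
  assumes "(f has_real_derivative D) (at t)" "isCont g t" "g t < f t"
  shows "((\<lambda>s. max (f s) (g s)) has_real_derivative D) (at t)"
proof -
  have "isCont (\<lambda>s. f s - g s) t"
    using DERIV_isCont[OF assms(1)] assms(2) by (intro continuous_intros)
  then have "eventually (\<lambda>s. 0 < f s - g s) (at t)"
    using assms(3) unfolding isCont_def by (intro order_tendstoD(1)) auto
  then have "eventually (\<lambda>s. 0 < f s - g s) (nhds t)"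
    using assms(3) by (simp add: eventually_nhds_conv_at)
  then have "eventually (\<lambda>s. max (f s) (g s) = f s) (nhds t)"
    by eventually_elim auto
  then show ?thesis
    using assms(1) by (simp add: DERIV_cong_ev)
qed

lemma DERIV_Max_at_maximiser:
  fixes f :: "'a \<Rightarrow> real \<Rightarrow> real"
  assumes "finite S" "S \<noteq> {}"
    and "\<And>k. k \<in> S \<Longrightarrow> (f k has_real_derivative d k) (at t)"
    and "\<And>i j. i \<in> S \<Longrightarrow> j \<in> S \<Longrightarrow> f i t = f j t \<Longrightarrow> d i = d j"
  shows "\<exists>k\<in>S. (\<forall>j\<in>S. f j t \<le> f k t) \<and>
           ((\<lambda>s. Max ((\<lambda>j. f j s) ` S)) has_real_derivative d k) (at t)"
  using assms
proof (induction S rule: finite_ne_induct)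
  case (singleton k)
  then have "(f k has_real_derivative d k) (at t)"
    by blast
  then show ?case
    by simp
next
  case (insert j S)
  have "\<exists>k\<in>S. (\<forall>i\<in>S. f i t \<le> f k t) \<and>
          ((\<lambda>s. Max ((\<lambda>i. f i s) ` S)) has_real_derivative d k) (at t)"
    by (intro insert.IH) (use insert.prems in blast)+
  then obtain k where k: "k \<in> S" "\<forall>i\<in>S. f i t \<le> f k t"
    and Max_S: "((\<lambda>s. Max ((\<lambda>i. f i s) ` S)) has_real_derivative d k) (at t)"
    by blast
  have Max_S_at_t: "Max ((\<lambda>i. f i t) ` S) = f k t"
    using k insert.hyps(1) by (intro Max_eqI) auto
  have Max_insert: "Max ((\<lambda>i. f i s) ` insert j S) = max (f j s) (Max ((\<lambda>i. f i s) ` S))" for s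
    using insert.hyps by simp
  have f_j: "(f j has_real_derivative d j) (at t)"
    using insert.prems(1) by blast
  consider "f k t < f j t" | "f j t < f k t" | "f j t = f k t"
    by linarith
  then show ?case
  proof cases
    case 1
    then have "((\<lambda>s. max (f j s) (Max ((\<lambda>i. f i s) ` S))) has_real_derivative d j) (at t)"
      using Max_S_at_t by (intro DERIV_max_gt[OF f_j DERIV_isCont[OF Max_S]]) simp
    then show ?thesis
      using 1 k unfolding Max_insert by (intro bexI[of _ j]) force+
  next
    case 2
    then have "((\<lambda>s. max (Max ((\<lambda>i. f i s) ` S)) (f j s)) has_real_derivative d k) (at t)"
      using Max_S_at_t by (intro DERIV_max_gt[OF Max_S DERIV_isCont[OF f_j]]) simp
    then show ?thesis
      using 2 k unfolding Max_insert by (intro bexI[of _ k]) (auto simp: max.commute)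
  next
    case 3
    then have "d j = d k"
      using insert.prems(2) k(1) by blast
    then have "((\<lambda>s. max (f j s) (Max ((\<lambda>i. f i s) ` S))) has_real_derivative d k) (at t)"
      using 3 Max_S_at_t by (intro DERIV_max_tie[OF _ Max_S]) (use f_j in simp_all)
    then show ?thesis
      using 3 k unfolding Max_insert by (intro bexI[of _ k]) auto
  qed
qed

lemma DERIV_Min_at_minimiser:
  fixes f :: "'a \<Rightarrow> real \<Rightarrow> real"
  assumes "finite S" "S \<noteq> {}"
    and deriv: "\<And>k. k \<in> S \<Longrightarrow> (f k has_real_derivative d k) (at t)"
    and ties: "\<And>i j. i \<in> S \<Longrightarrow> j \<in> S \<Longrightarrow> f i t = f j t \<Longrightarrow> d i = d j"
  shows "\<exists>k\<in>S. (\<forall>j\<in>S. f k t \<le> f j t) \<and>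
           ((\<lambda>s. Min ((\<lambda>j. f j s) ` S)) has_real_derivative d k) (at t)"
proof -
  have "\<exists>k\<in>S. (\<forall>j\<in>S. - f j t \<le> - f k t) \<and>
          ((\<lambda>s. Max ((\<lambda>j. - f j s) ` S)) has_real_derivative - d k) (at t)"
  proof (rule DERIV_Max_at_maximiser[OF assms(1,2)])
    show "((\<lambda>s. - f k s) has_real_derivative - d k) (at t)" if "k \<in> S" for k
      using deriv[OF that] by (rule DERIV_minus)
    show "- d i = - d j" if "i \<in> S" "j \<in> S" "- f i t = - f j t" for i j
      using ties[OF that(1,2)] that(3) by simp
  qed
  then obtain k where k: "k \<in> S" "\<forall>j\<in>S. f k t \<le> f j t"
    and Max_neg: "((\<lambda>s. Max ((\<lambda>j. - f j s) ` S)) has_real_derivative - d k) (at t)"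
    by auto
  have "Min ((\<lambda>j. f j s) ` S) = - Max ((\<lambda>j. - f j s) ` S)" for s
    using assms(1,2) by (simp add: image_image)
  then have "((\<lambda>s. Min ((\<lambda>j. f j s) ` S)) has_real_derivative d k) (at t)"
    using DERIV_minus[OF Max_neg] by simp
  then show ?thesis
    using k by blast
qed

lemma trim_top_contains_greater:
  fixes v :: "'a \<Rightarrow> 'b::linorder"
  assumes "finite V" "T \<subseteq> V"
    and trim: "if card {j\<in>V. c < v j} < F then T = {j\<in>V. c < v j}
               else card T = F \<and> (\<forall>a\<in>T. \<forall>b\<in>V - T. v b \<le> v a)"
    and few: "card {j\<in>V. c < v j} \<le> F"
  shows "{j\<in>V. c < v j} \<subseteq> T"
proof (cases "card {j\<in>V. c < v j} < F")
  case True
  then show ?thesis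
    using trim by simp
next
  case False
  then have "card T = F" and top: "\<forall>a\<in>T. \<forall>b\<in>V - T. v b \<le> v a"
    using trim by auto
  show ?thesis
  proof (rule ccontr)
    assume "\<not> {j\<in>V. c < v j} \<subseteq> T"
    then obtain b where b: "b \<in> V" "c < v b" "b \<notin> T"
      by blast
    have "T \<subseteq> {j\<in>V. c < v j}"
      using top b \<open>T \<subseteq> V\<close> by (fastforce intro: less_le_trans)
    moreover have "card {j\<in>V. c < v j} \<le> card T"
      using few \<open>card T = F\<close> by simp
    ultimately have "T = {j\<in>V. c < v j}"
      using \<open>finite V\<close> by (intro card_seteq) auto
    then show False
      using b by blast
  qed
qed

lemma FTRC_removed_contains_outliers:
  assumes "FTRC_removed g F E N x y k t R" "finite (in_nbrs E k)"
  shows "card {j \<in> in_nbrs E k. g (x t k) < g (recv N x y k j t)} \<le> F \<Longrightarrow>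
           {j \<in> in_nbrs E k. g (x t k) < g (recv N x y k j t)} \<subseteq> R"
    and "card {j \<in> in_nbrs E k. g (recv N x y k j t) < g (x t k)} \<le> F \<Longrightarrow>
           {j \<in> in_nbrs E k. g (recv N x y k j t) < g (x t k)} \<subseteq> R"
proof -
  let ?V = "in_nbrs E k" and ?v = "\<lambda>j. g (recv N x y k j t)" and ?c = "g (x t k)"
  obtain RL RS where R: "R = RL \<union> RS" "RL \<subseteq> ?V" "RS \<subseteq> ?V"
    and RL: "if card {j\<in>?V. ?c < ?v j} < F then RL = {j\<in>?V. ?c < ?v j}
             else card RL = F \<and> (\<forall>a\<in>RL. \<forall>b\<in>?V - RL. ?v b \<le> ?v a)"
    and RS: "if card {j\<in>?V. ?v j < ?c} < F then RS = {j\<in>?V. ?v j < ?c}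
             else card RS = F \<and> (\<forall>a\<in>RS. \<forall>b\<in>?V - RS. ?v a \<le> ?v b)"
    using assms(1) unfolding FTRC_removed_def Let_def by blast
  show "{j\<in>?V. ?c < ?v j} \<subseteq> R" if "card {j\<in>?V. ?c < ?v j} \<le> F"
    using trim_top_contains_greater[OF assms(2) R(2) RL that] R(1) by blast
  show "{j\<in>?V. ?v j < ?c} \<subseteq> R" if "card {j\<in>?V. ?v j < ?c} \<le> F"
  proof -
    have "{j\<in>?V. - ?c < - ?v j} \<subseteq> RS"
      by (rule trim_top_contains_greater[OF assms(2) R(3)]) (use RS that in simp_all)
    then show ?thesis
      using R(1) by auto
  qed
qed

lemma FTRC_input_at_maximum:
  assumes "FTRC_removed g F E N x y k t R"
    and "finite (in_nbrs E k)" "in_nbrs E k \<subseteq> N \<union> A" "card (in_nbrs E k \<inter> A) \<le> F"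
    and "k \<in> N" "mono g" "0 \<le> \<alpha>"
    and max: "\<forall>j\<in>N. x t j \<le> x t k"
  shows "- \<alpha> \<le> FTRC_input \<alpha> g E N x y k t R \<and> FTRC_input \<alpha> g E N x y k t R \<le> 0"
proof -
  let ?G = "{j \<in> in_nbrs E k. g (x t k) < g (recv N x y k j t)}"
  have "g (recv N x y k j t) \<le> g (x t k)" if "j \<in> N" for j
    using max that \<open>mono g\<close> by (simp add: recv_def monoD)
  then have "?G \<subseteq> in_nbrs E k \<inter> A"
    using assms(3) by (auto simp: not_less[symmetric])
  then have "card ?G \<le> F"
    using assms(2,4) by (meson card_mono finite_Int le_trans)
  then have "?G \<subseteq> R"
    by (rule FTRC_removed_contains_outliers(1)[OF assms(1,2)])
  then have "(\<Sum>j \<in> (in_nbrs E k \<union> {k}) - R. g (recv N x y k j t) - g (x t k)) \<le> 0"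
    using \<open>k \<in> N\<close> by (intro sum_nonpos) (auto simp: recv_def not_less)
  then show ?thesis
    using \<open>0 \<le> \<alpha>\<close> by (auto simp: FTRC_input_def sgn_if)
qed

lemma FTRC_input_at_minimum:
  assumes "FTRC_removed g F E N x y k t R"
    and "finite (in_nbrs E k)" "in_nbrs E k \<subseteq> N \<union> A" "card (in_nbrs E k \<inter> A) \<le> F"
    and "k \<in> N" "mono g" "0 \<le> \<alpha>"
    and min: "\<forall>j\<in>N. x t k \<le> x t j"
  shows "0 \<le> FTRC_input \<alpha> g E N x y k t R \<and> FTRC_input \<alpha> g E N x y k t R \<le> \<alpha>"
proof -
  let ?L = "{j \<in> in_nbrs E k. g (recv N x y k j t) < g (x t k)}"
  have "g (x t k) \<le> g (recv N x y k j t)" if "j \<in> N" for j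
    using min that \<open>mono g\<close> by (simp add: recv_def monoD)
  then have "?L \<subseteq> in_nbrs E k \<inter> A"
    using assms(3) by (auto simp: not_less[symmetric])
  then have "card ?L \<le> F"
    using assms(2,4) by (meson card_mono finite_Int le_trans)
  then have "?L \<subseteq> R"
    by (rule FTRC_removed_contains_outliers(2)[OF assms(1,2)])
  then have "(\<Sum>j \<in> (in_nbrs E k \<union> {k}) - R. g (recv N x y k j t) - g (x t k)) \<ge> 0"
    using \<open>k \<in> N\<close> by (intro sum_nonneg) (auto simp: recv_def not_less)
  then show ?thesis
    using \<open>0 \<le> \<alpha>\<close> by (auto simp: FTRC_input_def sgn_if)
qed

lemma FTRC_extremes_derivative_bounds:
  fixes x :: "real \<Rightarrow> nat \<Rightarrow> real"
  assumes "finite N" "mono g" "0 \<le> \<alpha>"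
    and nbrs: "\<And>k. k \<in> N \<Longrightarrow>
      finite (in_nbrs E k) \<and> in_nbrs E k \<subseteq> N \<union> A \<and> card (in_nbrs E k \<inter> A) \<le> F"
    and FTRC: "\<forall>k\<in>N. \<exists>R. FTRC_removed g F E N x y k t R \<and>
      ((\<lambda>s. x s k) has_real_derivative FTRC_input \<alpha> g E N x y k t R) (at t)"
    and ties: "\<forall>i\<in>N. \<forall>j\<in>N. \<forall>a b. x t i = x t j \<longrightarrow>
      ((\<lambda>s. x s i) has_real_derivative a) (at t) \<longrightarrow> ((\<lambda>s. x s j) has_real_derivative b) (at t) \<longrightarrow> a = b"
  shows "(\<exists>D. ((\<lambda>s. Max ((\<lambda>k. x s k) ` N)) has_real_derivative D) (at t) \<and> - \<alpha> \<le> D \<and> D \<le> 0) \<and>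
    (\<exists>D. ((\<lambda>s. Min ((\<lambda>k. x s k) ` N)) has_real_derivative D) (at t) \<and> 0 \<le> D \<and> D \<le> \<alpha>)"
proof (cases "N = {}")
  case True
  \<comment> \<open>\<open>Max {}\<close> and \<open>Min {}\<close> are unspecified constants, so both derivatives are 0.\<close>
  show ?thesis
    unfolding True image_empty
    by (intro conjI exI[of _ 0] DERIV_const) (use \<open>0 \<le> \<alpha>\<close> in auto)
next
  case False
  obtain R where R: "\<And>k. k \<in> N \<Longrightarrow> FTRC_removed g F E N x y k t (R k)"
    and deriv: "\<And>k. k \<in> N \<Longrightarrow>
      ((\<lambda>s. x s k) has_real_derivative FTRC_input \<alpha> g E N x y k t (R k)) (at t)"
    using FTRC by metis
  define d where "d k = FTRC_input \<alpha> g E N x y k t (R k)" for k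
  have equal_inputs: "d i = d j" if "i \<in> N" "j \<in> N" "x t i = x t j" for i j
    using ties that deriv unfolding d_def by blast
  obtain k where k: "k \<in> N" "\<forall>j\<in>N. x t j \<le> x t k"
    and "((\<lambda>s. Max ((\<lambda>j. x s j) ` N)) has_real_derivative d k) (at t)"
    using DERIV_Max_at_maximiser[of N "\<lambda>k s. x s k" d, OF \<open>finite N\<close> False]
      deriv equal_inputs unfolding d_def by blast
  moreover obtain l where l: "l \<in> N" "\<forall>j\<in>N. x t l \<le> x t j"
    and "((\<lambda>s. Min ((\<lambda>j. x s j) ` N)) has_real_derivative d l) (at t)"
    using DERIV_Min_at_minimiser[of N "\<lambda>k s. x s k" d, OF \<open>finite N\<close> False]
      deriv equal_inputs unfolding d_def by blast
  moreover note FTRC_input_at_maximum[OF R[OF k(1)] _ _ _ k(1) \<open>mono g\<close> \<open>0 \<le> \<alpha>\<close> k(2)]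
    and FTRC_input_at_minimum[OF R[OF l(1)] _ _ _ l(1) \<open>mono g\<close> \<open>0 \<le> \<alpha>\<close> l(2)]
  ultimately show ?thesis
    using nbrs[OF k(1)] nbrs[OF l(1)] unfolding d_def by blast
qed

theorem theorem3:
  fixes n F :: nat and E :: "(nat \<times> nat) set" and N A :: "nat set"
    and \<alpha> :: real and g :: "real \<Rightarrow> real" and t1 :: ereal
    and x :: "real \<Rightarrow> nat \<Rightarrow> real"
    and y :: "nat \<Rightarrow> nat \<Rightarrow> real \<Rightarrow> real"
  defines "V \<equiv> {1..n}"
  defines "I \<equiv> {t::real. 0 \<le> t \<and> ereal t < t1}"
  assumes n2: "n \<ge> 2"
    and E_sub: "E \<subseteq> V \<times> V"
    and no_loops: "\<forall>i. (i, i) \<notin> E"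
    and partition: "N \<union> A = V" "N \<inter> A = {}"
    and g_mono: "strict_mono g"
    and alpha_pos: "\<alpha> > 0"
    and meas: "\<forall>k\<in>A. \<forall>i\<in>N. (\<lambda>t. g (y i k t)) \<in> borel_measurable (lebesgue_on I)"
    and Flocal: "F_local V E A F"
    and robust: "r_robust V E (2 * F + 1)"
    and absc: "\<forall>k\<in>N. abs_cont_on (\<lambda>t. x t k) I"
    and traj: "AE t in lebesgue. t \<in> I \<longrightarrow>
        (\<forall>k\<in>N. \<exists>R. FTRC_removed g F E N x y k t R \<and>
             ((\<lambda>s. x s k) has_real_derivative FTRC_input \<alpha> g E N x y k t R) (at t))"
  shows "AE t in lebesgue. t \<in> I \<longrightarrow>
      (\<exists>D. ((\<lambda>s. Max ((\<lambda>k. x s k) ` N)) has_real_derivative D) (at t) \<and> - \<alpha> \<le> D \<and> D \<le> 0) \<and>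
      (\<exists>D. ((\<lambda>s. Min ((\<lambda>k. x s k) ` N)) has_real_derivative D) (at t) \<and> 0 \<le> D \<and> D \<le> \<alpha>)"
proof -
  have "finite V"
    by (simp add: V_def)
  then have "finite N"
    using partition(1) by (metis finite_Un)
  have nbrs_V: "in_nbrs E k \<subseteq> V" for k
    using E_sub by (auto simp: in_nbrs_def)
  have nbrs: "finite (in_nbrs E k) \<and> in_nbrs E k \<subseteq> N \<union> A \<and> card (in_nbrs E k \<inter> A) \<le> F"
    if "k \<in> N" for k
  proof (intro conjI)
    show "finite (in_nbrs E k)"
      using nbrs_V \<open>finite V\<close> by (rule finite_subset)
    show "in_nbrs E k \<subseteq> N \<union> A"
      using nbrs_V partition(1) by blast
    show "card (in_nbrs E k \<inter> A) \<le> F"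
      using Flocal partition that unfolding F_local_def by blast
  qed
  have "AE t in lebesgue. \<forall>i\<in>N. \<forall>j\<in>N. \<forall>a b. x t i = x t j \<longrightarrow>
      ((\<lambda>s. x s i) has_real_derivative a) (at t) \<longrightarrow> ((\<lambda>s. x s j) has_real_derivative b) (at t) \<longrightarrow> a = b"
    by (rule AE_coincident_imp_equal_derivatives[OF \<open>finite N\<close>, of "\<lambda>k s. x s k"])
  with traj show ?thesis
  proof eventually_elim
    case (elim t)
    show ?case
      using FTRC_extremes_derivative_bounds[OF \<open>finite N\<close> strict_mono_mono[OF g_mono]
          less_imp_le[OF alpha_pos] nbrs _ elim(2)] elim(1)
      by blast
  qed
qed

end
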